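(* Let $n\ge0$, $a_{n,0},\dots,a_{n,n}\in\mathbb C$, and let $P_n$ be the associated polynomial. Then $$P_n(z)=\imath^n n!\sum_{k=0}^n a_{n,k}\binom{-\imath z-\tfrac12+k}{n}=\imath^n\sum_{k=0}^n a_{n,n-k}\left(-\imath z+\tfrac12-k\right)_n .$$ Equivalently, writing $P_n(z)=\sum_{k=0}^n b_{n,k}z^k$, for $0\le k\le n$, $$b_{n,k}=(-1)^k\imath^{n+k}\sum_{\ell=0}^n a_{n,\ell}\sum_{j=0}^{n-k}s(n,j+k)\binom{j+k}{k}\left(\ell-\tfrac12\right)^j .$$
   Context: $\imath=\sqrt{-1}$. $\mathcal{A}$ denotes the quotient of the free associative $\mathbb{C}$-algebra on two noncommuting generators $p,q$ by the two-sided ideal generated by $qp-pq-\imath$, and $z=\tfrac12(qp+pq)\in\mathcal A$. For $n\ge0$ and complex numbers $a_{n,0},\dots,a_{n,n}$, there is a unique polynomial $P_n\in\mathbb{C}[X]$ of degree at most $n$ with $\sum_{k=0}^n a_{n,k}q^kp^nq^{n-k}=P_n(z)$ in $\mathcal A$; it is called the polynomial associated to $\{a_{n,k}\}$. For a complex variable $x$, $\binom{x}{n}=\frac{1}{n!}\prod_{\ell=0}^{n-1}(x-\ell)$ and $(x)_n=x(x+1)\cdots(x+n-1)$. $s(n,k)$ denotes the (signed) Stirling numbers of the first kind. *)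

theory Defs
  imports Complex_Main "HOL-Computational_Algebra.Polynomial" "HOL-Combinatorics.Stirling"
begin

definition signed_stirling :: "nat \<Rightarrow> nat \<Rightarrow> complex" where
  "signed_stirling n k = (-1) ^ (n + k) * of_nat (stirling n k)"

text \<open>A complex algebra: a ring 'a together with a ring homomorphism c from the
  complex numbers into the centre of 'a (the scalar embedding).\<close>
definition complex_scalars :: "(complex \<Rightarrow> 'a::ring_1) \<Rightarrow> bool" where
  "complex_scalars c \<longleftrightarrow> c 1 = 1 \<and> (\<forall>x y. c (x + y) = c x + c y)
     \<and> (\<forall>x y. c (x * y) = c x * c y) \<and> (\<forall>x y. c x * y = y * c x)"

definition alg_poly_eval :: "(complex \<Rightarrow> 'a::ring_1) \<Rightarrow> complex poly \<Rightarrow> 'a \<Rightarrow> 'a" where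
  "alg_poly_eval c P x = (\<Sum>k\<le>degree P. c (coeff P k) * x ^ k)"

end

theory Submission
  imports Defs
begin

(* The Weyl algebra relation qp - pq = i forces every word q^k p^n q^(n-k) to be a polynomial
   in the symmetric element Z = (qp + pq)/2, and that polynomial is an explicit product of
   linear factors.

   1. The evaluation map P \<mapsto> P(x) into an algebra with central complex scalars is a ring
      homomorphism; moreover, if x y = y (x + d), then P(x) y = y P(x + d).
   2. If u v = Z + a and v u = Z + b, then Z v = v (Z + a - b), and by induction on j
      u^j v^j = \<Prod>m<j (Z + a + m (a - b)).  Since qp = Z + i/2 and pq = Z - i/2, this
      evaluates both q^k p^k and p^(n-k) q^(n-k), hence the word q^k p^n q^(n-k).
   3. The resulting product of linear factors is, as a function of z, the Pochhammer symbol
      i^n n! binom(-iz - 1/2 + k, n); expanding the falling factorial by Stirling numbers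
      gives its coefficients.
   The associated polynomial is the a-weighted sum of these word polynomials, and all
   claimed formulas follow termwise. *)

context
  fixes c :: "complex \<Rightarrow> 'a::ring_1"
  assumes scalars: "complex_scalars c"
begin

lemma scalar_1: "c 1 = 1"
  and scalar_add: "c (x + y) = c x + c y"
  and scalar_mult: "c (x * y) = c x * c y"
  and scalar_central: "c x * z = z * c x"
  using scalars unfolding complex_scalars_def by blast+

lemma scalar_0: "c 0 = 0"
  using scalar_add[of 0 0] by simp

lemma scalar_minus: "c (- x) = - c x"
proof -
  have "c x + c (- x) = 0"
    using scalar_add[of x "- x"] by (simp add: scalar_0)
  then show ?thesis
    by (metis add.inverse_unique)
qed

lemma alg_poly_eval_upto:
  assumes "degree f \<le> N"
  shows "alg_poly_eval c f x = (\<Sum>k\<le>N. c (coeff f k) * x ^ k)"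
  unfolding alg_poly_eval_def
  by (rule sum.mono_neutral_left) (use assms in \<open>auto simp: coeff_eq_0 scalar_0\<close>)

lemma alg_poly_eval_0: "alg_poly_eval c 0 x = 0"
  by (simp add: alg_poly_eval_def scalar_0)

lemma alg_poly_eval_const: "alg_poly_eval c [:a:] x = c a"
  by (simp add: alg_poly_eval_def)

lemma alg_poly_eval_add: "alg_poly_eval c (f + g) x = alg_poly_eval c f x + alg_poly_eval c g x"
proof -
  define N where "N = max (degree f) (degree g)"
  have "alg_poly_eval c (f + g) x = (\<Sum>k\<le>N. c (coeff (f + g) k) * x ^ k)"
    by (rule alg_poly_eval_upto) (simp add: N_def degree_add_le)
  also have "\<dots> = (\<Sum>k\<le>N. c (coeff f k) * x ^ k) + (\<Sum>k\<le>N. c (coeff g k) * x ^ k)"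
    by (simp add: scalar_add distrib_right sum.distrib)
  also have "\<dots> = alg_poly_eval c f x + alg_poly_eval c g x"
    using alg_poly_eval_upto[of f N x] alg_poly_eval_upto[of g N x] by (simp add: N_def)
  finally show ?thesis .
qed

lemma alg_poly_eval_smult: "alg_poly_eval c (smult a f) x = c a * alg_poly_eval c f x"
proof -
  have "alg_poly_eval c (smult a f) x = (\<Sum>k\<le>degree f. c (coeff (smult a f) k) * x ^ k)"
    by (rule alg_poly_eval_upto) simp
  then show ?thesis
    by (simp add: alg_poly_eval_def scalar_mult sum_distrib_left mult.assoc)
qed

lemma alg_poly_eval_sum: "alg_poly_eval c (sum F A) x = (\<Sum>k\<in>A. alg_poly_eval c (F k) x)"
  by (induct A rule: infinite_finite_induct) (auto simp: alg_poly_eval_0 alg_poly_eval_add)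

text \<open>Horner's rule; the scalar coefficients commute with the point of evaluation.\<close>

lemma alg_poly_eval_pCons: "alg_poly_eval c (pCons a f) x = c a + x * alg_poly_eval c f x"
proof -
  have "alg_poly_eval c (pCons a f) x = (\<Sum>k\<le>Suc (degree f). c (coeff (pCons a f) k) * x ^ k)"
    by (rule alg_poly_eval_upto) (simp add: degree_pCons_le)
  also have "\<dots> = c a + (\<Sum>k\<le>degree f. c (coeff f k) * x * x ^ k)"
    by (subst sum.atMost_Suc_shift) (simp add: mult.assoc)
  also have "\<dots> = c a + x * alg_poly_eval c f x"
    by (simp add: alg_poly_eval_def sum_distrib_left scalar_central mult.assoc)
  finally show ?thesis .
qed

lemma alg_poly_eval_linear: "alg_poly_eval c [:a, 1:] x = c a + x"
  by (simp add: alg_poly_eval_pCons alg_poly_eval_const alg_poly_eval_0 scalar_1)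

lemma alg_poly_eval_1: "alg_poly_eval c 1 x = 1"
  by (simp add: alg_poly_eval_def scalar_1)

lemma alg_poly_eval_mult: "alg_poly_eval c (f * g) x = alg_poly_eval c f x * alg_poly_eval c g x"
proof (induct f rule: pCons_induct)
  case 0
  then show ?case by (simp add: alg_poly_eval_0)
next
  case (pCons a f)
  then show ?case
    by (simp add: alg_poly_eval_add alg_poly_eval_smult alg_poly_eval_pCons alg_poly_eval_0
        scalar_0 distrib_right mult.assoc)
qed

lemma alg_poly_eval_shift:
  assumes shift: "x * y = y * (x + c d)"
  shows "alg_poly_eval c f x * y = y * alg_poly_eval c (pcompose f [:d, 1:]) x"
proof (induct f rule: pCons_induct)
  case 0
  then show ?case by (simp add: alg_poly_eval_0)
next
  case (pCons a f)
  let ?g = "alg_poly_eval c (pcompose f [:d, 1:]) x"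
  have "alg_poly_eval c (pCons a f) x * y = c a * y + x * (alg_poly_eval c f x * y)"
    by (simp add: alg_poly_eval_pCons distrib_right mult.assoc)
  also have "\<dots> = y * c a + y * ((x + c d) * ?g)"
    by (simp only: pCons scalar_central[of a y] shift mult.assoc[symmetric])
  also have "\<dots> = y * (c a + (c d + x) * ?g)"
    by (simp only: distrib_left add.commute)
  also have "\<dots> = y * alg_poly_eval c (pcompose (pCons a f) [:d, 1:]) x"
    by (simp only: pcompose_pCons alg_poly_eval_add alg_poly_eval_const alg_poly_eval_mult
        alg_poly_eval_linear)
  finally show ?case .
qed

lemma commutator_shift:
  assumes uv: "u * v = c a + Z" and vu: "v * u = c b + Z"
  shows "Z * u = u * (Z + c (b - a))"
proof -
  have "Z * u = u * (v * u) - c a * u"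
    by (simp add: uv algebra_simps flip: mult.assoc)
  also have "\<dots> = u * (Z + (c b - c a))"
    by (simp add: vu scalar_central[of a u] algebra_simps)
  also have "c b - c a = c (b - a)"
    using scalar_add[of a "b - a"] by simp
  finally show ?thesis .
qed

end

definition shifted_product :: "complex \<Rightarrow> complex \<Rightarrow> nat \<Rightarrow> complex poly" where
  "shifted_product a d j = (\<Prod>m<j. [:a + d * of_nat m, 1:])"

lemma shifted_product_Suc:
  "shifted_product a d (Suc j) = [:a, 1:] * pcompose (shifted_product a d j) [:d, 1:]"
proof -
  have "pcompose [:a + d * of_nat m, 1:] [:d, 1:] = [:a + d * of_nat (Suc m), 1:]" for m
    by (simp add: pcompose_pCons algebra_simps)
  then show ?thesis
    unfolding shifted_product_def pcompose_prod prod.lessThan_Suc_shift by simp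
qed

lemma degree_shifted_product: "degree (shifted_product a d j) = j"
  unfolding shifted_product_def by (subst degree_prod_sum_eq) auto

lemma poly_shifted_product:
  assumes "d \<noteq> 0"
  shows "poly (shifted_product a d j) z = d ^ j * pochhammer ((z + a) / d) j"
proof -
  have "poly (shifted_product a d j) z = (\<Prod>m<j. d * ((z + a) / d + of_nat m))"
    unfolding shifted_product_def poly_prod
    by (rule prod.cong) (use assms in \<open>simp_all add: field_simps\<close>)
  then show ?thesis
    by (simp add: prod.distrib pochhammer_prod atLeast0LessThan)
qed

lemma power_product_eval:
  fixes c :: "complex \<Rightarrow> 'a::ring_1"
  assumes scalars: "complex_scalars c"
    and uv: "u * v = c a + Z" and vu: "v * u = c b + Z"
  shows "u ^ j * v ^ j = alg_poly_eval c (shifted_product a (a - b) j) Z"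
proof (induct j)
  case 0
  then show ?case
    by (simp add: shifted_product_def alg_poly_eval_1[OF scalars])
next
  case (Suc j)
  have "u ^ Suc j * v ^ Suc j = u * (alg_poly_eval c (shifted_product a (a - b) j) Z * v)"
    unfolding power_Suc[of u] power_Suc2[of v] Suc[symmetric] by (simp only: mult.assoc)
  also have "\<dots> = u * v * alg_poly_eval c (pcompose (shifted_product a (a - b) j) [:a - b, 1:]) Z"
    by (simp only: alg_poly_eval_shift[OF scalars commutator_shift[OF scalars vu uv]] mult.assoc)
  also have "\<dots> = alg_poly_eval c (shifted_product a (a - b) (Suc j)) Z"
    by (simp only: shifted_product_Suc alg_poly_eval_mult[OF scalars]
        alg_poly_eval_linear[OF scalars] uv)
  finally show ?case .
qed

text \<open>The polynomial in Z representing the word q^k p^n q^(n-k).\<close>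

definition word_poly :: "nat \<Rightarrow> nat \<Rightarrow> complex poly" where
  "word_poly n k = shifted_product (\<i>/2) \<i> k * shifted_product (-\<i>/2) (-\<i>) (n - k)"

context
  fixes c :: "complex \<Rightarrow> 'a::ring_1" and p q :: 'a
  assumes scalars: "complex_scalars c"
    and weyl: "q * p - p * q = c \<i>"
begin

lemma weyl_symmetric_element:
  defines "Z \<equiv> c (1/2) * (q * p + p * q)"
  shows "q * p = c (\<i>/2) + Z" and "p * q = c (-\<i>/2) + Z"
proof -
  have qp: "q * p = c \<i> + p * q"
    using weyl by (simp add: algebra_simps)
  have "Z = c (1/2) * c \<i> + (c (1/2) + c (1/2)) * (p * q)"
    unfolding Z_def qp by (simp add: algebra_simps)
  also have "\<dots> = c (\<i>/2) + p * q"
    by (simp add: scalar_1[OF scalars] flip: scalar_add[OF scalars] scalar_mult[OF scalars])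
  finally have pq: "p * q = c (-\<i>/2) + Z"
    by (simp add: scalar_minus[OF scalars])
  then show "p * q = c (-\<i>/2) + Z" .
  have "c \<i> + c (- \<i> / 2) = c (\<i>/2)"
    by (simp flip: scalar_add[OF scalars])
  then show "q * p = c (\<i>/2) + Z"
    unfolding qp pq by (simp only: add.assoc[symmetric])
qed

lemma word_eval:
  assumes "k \<le> n"
  shows "q ^ k * p ^ n * q ^ (n - k) = alg_poly_eval c (word_poly n k) (c (1/2) * (q * p + p * q))"
proof -
  note qp = weyl_symmetric_element(1) and pq = weyl_symmetric_element(2)
  have "p ^ n = p ^ k * p ^ (n - k)"
    using assms by (simp flip: power_add)
  then have "q ^ k * p ^ n * q ^ (n - k) = (q ^ k * p ^ k) * (p ^ (n - k) * q ^ (n - k))"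
    by (simp add: mult.assoc)
  also have "\<dots> = alg_poly_eval c (shifted_product (\<i>/2) \<i> k) (c (1/2) * (q * p + p * q))
      * alg_poly_eval c (shifted_product (-\<i>/2) (-\<i>) (n - k)) (c (1/2) * (q * p + p * q))"
    using power_product_eval[OF scalars qp pq, of k] power_product_eval[OF scalars pq qp, of "n - k"]
    by simp
  finally show ?thesis
    by (simp add: word_poly_def alg_poly_eval_mult[OF scalars])
qed

end

text \<open>As a function of z, the word polynomial is i^n n! binom(-iz - 1/2 + k, n): with
  x = -iz - 1/2 + k one has n! binom(x, n) = (-1)^n (-x)_n, and the Pochhammer symbol
  (-x)_n splits after k factors into the two shifted products defining the word polynomial.\<close>

lemma poly_word_poly:
  assumes "k \<le> n"
  shows "poly (word_poly n k) z = \<i> ^ n * fact n * ((- \<i> * z - 1/2 + of_nat k) gchoose n)"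
proof -
  define m where "m = n - k"
  have n: "n = k + m" using assms by (simp add: m_def)
  have "pochhammer (\<i> * z + 1/2 - of_nat k) n
      = pochhammer (\<i> * z + 1/2 - of_nat k) k * pochhammer (\<i> * z + 1/2) m"
    unfolding n pochhammer_product' by simp
  also have "pochhammer (\<i> * z + 1/2 - of_nat k) k = (-1) ^ k * pochhammer (- \<i> * z + 1/2) k"
    using pochhammer_minus[of "- \<i> * z - 1/2 + of_nat k" k] by (simp add: algebra_simps)
  finally have split: "pochhammer (\<i> * z + 1/2 - of_nat k) n
      = (-1) ^ k * pochhammer (- \<i> * z + 1/2) k * pochhammer (\<i> * z + 1/2) m" .
  have "\<i> ^ n * (-1) ^ n * (-1) ^ k = \<i> ^ k * \<i> ^ m * ((-1) ^ m * ((-1) ^ k * (-1) ^ k))"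
    by (simp add: n power_add mult_ac)
  also have "(-1::complex) ^ k * (-1) ^ k = 1"
    by (simp flip: power_add)
  finally have signs: "\<i> ^ k * (- \<i>) ^ m = \<i> ^ n * (-1) ^ n * (-1) ^ k"
    by (simp add: power_minus[of \<i>] mult_ac)
  have "poly (word_poly n k) z
      = \<i> ^ k * (- \<i>) ^ m * pochhammer (- \<i> * z + 1/2) k * pochhammer (\<i> * z + 1/2) m"
  proof -
    have "(z + \<i>/2) / \<i> = - \<i> * z + 1/2" and "(z + - \<i>/2) / (- \<i>) = \<i> * z + 1/2"
      by (simp_all add: field_simps)
    then show ?thesis
      by (simp add: word_poly_def poly_shifted_product m_def mult_ac add.commute)
  qed
  also have "\<dots> = \<i> ^ n * (-1) ^ n * pochhammer (\<i> * z + 1/2 - of_nat k) n"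
    by (simp add: signs split mult_ac)
  finally show ?thesis
    by (simp add: gbinomial_pochhammer algebra_simps)
qed

lemma degree_word_poly:
  assumes "k \<le> n"
  shows "degree (word_poly n k) \<le> n"
  using degree_mult_le[of "shifted_product (\<i>/2) \<i> k" "shifted_product (-\<i>/2) (-\<i>) (n - k)"] assms
  by (simp add: word_poly_def degree_shifted_product)

lemma falling_factorial_signed_stirling:
  fixes x :: complex
  shows "fact n * (x gchoose n) = (\<Sum>j\<le>n. signed_stirling n j * x ^ j)"
proof -
  have "fact n * (x gchoose n) = (-1) ^ n * pochhammer (- x) n"
    by (simp add: gbinomial_pochhammer)
  also have "\<dots> = (\<Sum>j\<le>n. (-1) ^ n * of_nat (stirling n j) * (- x) ^ j)"
    by (simp add: stirling_pochhammer[symmetric] sum_distrib_left mult.assoc)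
  also have "\<dots> = (\<Sum>j\<le>n. signed_stirling n j * x ^ j)"
    by (simp add: signed_stirling_def power_minus[of x] power_add mult_ac)
  finally show ?thesis .
qed

lemma word_poly_signed_stirling:
  assumes "k \<le> n"
  shows "word_poly n k
    = smult (\<i> ^ n) (\<Sum>j\<le>n. smult (signed_stirling n j) ([:of_nat k - 1/2, - \<i>:] ^ j))"
proof (rule poly_ext)
  fix z
  have "- \<i> * z - 1/2 + of_nat k = poly [:of_nat k - 1/2, - \<i>:] z"
    by simp
  then show "poly (word_poly n k) z
      = poly (smult (\<i> ^ n) (\<Sum>j\<le>n. smult (signed_stirling n j) ([:of_nat k - 1/2, - \<i>:] ^ j))) z"
    by (simp add: poly_word_poly[OF assms] poly_sum mult.assoc falling_factorial_signed_stirling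
        del: poly_pCons)
qed

lemma coeff_sum_linear_powers:
  fixes s :: "nat \<Rightarrow> complex" and b \<beta> :: complex
  assumes "k \<le> n"
  shows "coeff (\<Sum>j\<le>n. smult (s j) ([:\<beta>, b:] ^ j)) k
    = b ^ k * (\<Sum>j\<le>n - k. s (j + k) * of_nat ((j + k) choose k) * \<beta> ^ j)"
proof -
  let ?g = "\<lambda>j. s j * coeff ([:\<beta>, b:] ^ j) k"
  have low: "coeff ([:\<beta>, b:] ^ j) k = 0" if "j < k" for j
  proof (rule coeff_eq_0)
    have "degree ([:\<beta>, b:] ^ j) \<le> degree [:\<beta>, b:] * j"
      by (rule degree_power_le)
    also have "\<dots> \<le> j"
      using degree_pCons_le[of \<beta> "[:b:]"] by simp
    finally show "degree ([:\<beta>, b:] ^ j) < k"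
      using that by simp
  qed
  have "coeff (\<Sum>j\<le>n. smult (s j) ([:\<beta>, b:] ^ j)) k = (\<Sum>j\<in>{k..n}. ?g j)"
    by (simp add: coeff_sum) (rule sum.mono_neutral_right, auto simp: low)
  also have "\<dots> = (\<Sum>j\<in>{0..n - k}. ?g (j + k))"
    using sum.shift_bounds_cl_nat_ivl[of ?g 0 k "n - k"] assms by simp
  also have "\<dots> = b ^ k * (\<Sum>j\<le>n - k. s (j + k) * of_nat ((j + k) choose k) * \<beta> ^ j)"
    by (simp add: atLeast0AtMost sum_distrib_left coeff_linear_poly_power mult_ac)
  finally show ?thesis .
qed

lemma reversed_pochhammer_sum:
  fixes a :: "nat \<Rightarrow> complex" and w :: complex
  shows "(\<Sum>k\<le>n. a (n - k) * pochhammer (w - of_nat k) n)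
    = fact n * (\<Sum>k\<le>n. a k * ((w - 1 + of_nat k) gchoose n))"
proof -
  have "(\<Sum>k\<le>n. a (n - k) * pochhammer (w - of_nat k) n)
      = (\<Sum>k\<le>n. a k * pochhammer (w - of_nat (n - k)) n)"
    using sum.atLeastAtMost_rev[of "\<lambda>k. a (n - k) * pochhammer (w - of_nat k) n" 0 n]
    by (simp add: atLeast0AtMost)
  also have "\<dots> = (\<Sum>k\<le>n. fact n * (a k * ((w - 1 + of_nat k) gchoose n)))"
  proof (rule sum.cong)
    fix k assume "k \<in> {..n}"
    then have "w - 1 + of_nat k - of_nat n + 1 = w - of_nat (n - k)"
      by (simp add: of_nat_diff)
    then show "a k * pochhammer (w - of_nat (n - k)) n = fact n * (a k * ((w - 1 + of_nat k) gchoose n))"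
      by (simp add: gbinomial_pochhammer')
  qed simp
  finally show ?thesis
    by (simp add: sum_distrib_left)
qed

definition associated_poly :: "nat \<Rightarrow> (nat \<Rightarrow> complex) \<Rightarrow> complex poly" where
  "associated_poly n a = (\<Sum>l\<le>n. smult (a l) (word_poly n l))"

lemma degree_associated_poly: "degree (associated_poly n a) \<le> n"
  unfolding associated_poly_def
  by (intro degree_sum_le) (auto intro: order_trans[OF degree_smult_le] degree_word_poly)

lemma associated_poly_eval:
  fixes c :: "complex \<Rightarrow> 'a::ring_1" and p q :: 'a
  assumes scalars: "complex_scalars c" and weyl: "q * p - p * q = c \<i>"
  shows "(\<Sum>k\<le>n. c (a k) * q ^ k * p ^ n * q ^ (n - k))
    = alg_poly_eval c (associated_poly n a) (c (1/2) * (q * p + p * q))"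
  unfolding associated_poly_def alg_poly_eval_sum[OF scalars] alg_poly_eval_smult[OF scalars]
  by (rule sum.cong) (simp_all add: word_eval[OF scalars weyl, symmetric] mult.assoc)

lemma poly_associated_poly:
  "poly (associated_poly n a) z
    = \<i> ^ n * fact n * (\<Sum>k\<le>n. a k * ((- \<i> * z - 1/2 + of_nat k) gchoose n))"
  by (simp add: associated_poly_def poly_sum poly_word_poly sum_distrib_left mult_ac)

lemma poly_associated_poly_pochhammer:
  "poly (associated_poly n a) z
    = \<i> ^ n * (\<Sum>k\<le>n. a (n - k) * pochhammer (- \<i> * z + 1/2 - of_nat k) n)"
  using reversed_pochhammer_sum[of a n "- \<i> * z + 1/2"]
  by (simp add: poly_associated_poly algebra_simps)

lemma coeff_associated_poly:
  assumes "k \<le> n"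
  shows "coeff (associated_poly n a) k = (-1) ^ k * \<i> ^ (n + k) *
    (\<Sum>l\<le>n. a l * (\<Sum>j\<le>n - k. signed_stirling n (j + k) * of_nat ((j + k) choose k)
                                   * (of_nat l - 1/2) ^ j))"
proof -
  have "coeff (word_poly n l) k = (-1) ^ k * \<i> ^ (n + k) *
      (\<Sum>j\<le>n - k. signed_stirling n (j + k) * of_nat ((j + k) choose k) * (of_nat l - 1/2) ^ j)"
    if "l \<le> n" for l
    by (simp add: word_poly_signed_stirling[OF that] coeff_sum_linear_powers[OF assms]
        power_minus[of \<i>] power_add mult_ac)
  then show ?thesis
    by (simp add: associated_poly_def coeff_sum sum_distrib_left mult_ac)
qed

theorem theorem3p8:
  fixes n :: nat and a :: "nat \<Rightarrow> complex"
    and c :: "complex \<Rightarrow> 'a::ring_1" and p q :: 'a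
  assumes "complex_scalars c"
    and "q * p - p * q = c \<i>"
  shows "\<exists>P :: complex poly. degree P \<le> n
     \<and> (\<Sum>k\<le>n. c (a k) * q ^ k * p ^ n * q ^ (n - k))
         = alg_poly_eval c P (c (1/2) * (q * p + p * q))
     \<and> (\<forall>z. poly P z = \<i> ^ n * fact n * (\<Sum>k\<le>n. a k * ((- \<i> * z - 1/2 + of_nat k) gchoose n)))
     \<and> (\<forall>z. poly P z = \<i> ^ n * (\<Sum>k\<le>n. a (n - k) * pochhammer (- \<i> * z + 1/2 - of_nat k) n))
     \<and> (\<forall>k\<le>n. coeff P k = (-1) ^ k * \<i> ^ (n + k) *
          (\<Sum>l\<le>n. a l * (\<Sum>j\<le>n - k. signed_stirling n (j + k) * of_nat ((j + k) choose k)
                                          * (of_nat l - 1/2) ^ j)))"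
proof (intro exI conjI allI impI)
  let ?P = "associated_poly n a"
  show "degree ?P \<le> n"
    by (rule degree_associated_poly)
  show "(\<Sum>k\<le>n. c (a k) * q ^ k * p ^ n * q ^ (n - k)) = alg_poly_eval c ?P (c (1/2) * (q * p + p * q))"
    by (rule associated_poly_eval[OF assms])
  show "poly ?P z = \<i> ^ n * fact n * (\<Sum>k\<le>n. a k * ((- \<i> * z - 1/2 + of_nat k) gchoose n))" for z
    by (rule poly_associated_poly)
  show "poly ?P z = \<i> ^ n * (\<Sum>k\<le>n. a (n - k) * pochhammer (- \<i> * z + 1/2 - of_nat k) n)" for z
    by (rule poly_associated_poly_pochhammer)
  show "coeff ?P k = (-1) ^ k * \<i> ^ (n + k) *
      (\<Sum>l\<le>n. a l * (\<Sum>j\<le>n - k. signed_stirling n (j + k) * of_nat ((j + k) choose k)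
                                     * (of_nat l - 1/2) ^ j))" if "k \<le> n" for k
    by (rule coeff_associated_poly[OF that])
qed

end
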